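(* For any commutative Noetherian ring $R$ with unity, $\Gamma_E(R)$ is not a cycle graph.
   Context: For $x,y\in R$ write $x\sim y$ iff $\operatorname{ann}(x)=\operatorname{ann}(y)$; $[x]$ denotes the equivalence class of $x$. Let $Z^*(R)$ be the set of nonzero zero divisors of $R$. The graph $\Gamma_E(R)$ is the simple graph whose vertices are the classes $[x]$ with $x\in Z^*(R)$, two distinct vertices $[x],[y]$ being adjacent iff $xy=0$. A cycle graph is an $n$-gon, $n\ge 3$: a graph on vertices $v_1,\dots,v_n$ whose only edges are $v_iv_{i+1}$ ($1\le i<n$) and $v_nv_1$. *)

theory Defs
  imports "HOL-Algebra.Ring_Divisibility"
begin

definition ann :: "('a, 'b) ring_scheme \<Rightarrow> 'a \<Rightarrow> 'a set" where
  "ann R x = {y \<in> carrier R. x \<otimes>\<^bsub>R\<^esub> y = \<zero>\<^bsub>R\<^esub>}"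

definition nz_zero_divisors :: "('a, 'b) ring_scheme \<Rightarrow> 'a set" where
  "nz_zero_divisors R = {x \<in> carrier R. x \<noteq> \<zero>\<^bsub>R\<^esub> \<and>
      (\<exists>y \<in> carrier R. y \<noteq> \<zero>\<^bsub>R\<^esub> \<and> x \<otimes>\<^bsub>R\<^esub> y = \<zero>\<^bsub>R\<^esub>)}"

definition ann_class :: "('a, 'b) ring_scheme \<Rightarrow> 'a \<Rightarrow> 'a set" where
  "ann_class R x = {y \<in> carrier R. ann R y = ann R x}"

definition GammaE_vertices :: "('a, 'b) ring_scheme \<Rightarrow> 'a set set" where
  "GammaE_vertices R = ann_class R ` nz_zero_divisors R"

text \<open>Adjacency of Gamma_E(R): distinct vertices [x],[y] adjacent iff xy = 0
  (independent of representatives).\<close>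
definition GammaE_adj :: "('a, 'b) ring_scheme \<Rightarrow> 'a set \<Rightarrow> 'a set \<Rightarrow> bool" where
  "GammaE_adj R A B \<longleftrightarrow> A \<in> GammaE_vertices R \<and> B \<in> GammaE_vertices R \<and> A \<noteq> B \<and>
      (\<exists>x \<in> nz_zero_divisors R. \<exists>y \<in> nz_zero_divisors R.
          A = ann_class R x \<and> B = ann_class R y \<and> x \<otimes>\<^bsub>R\<^esub> y = \<zero>\<^bsub>R\<^esub>)"

definition is_cycle_graph :: "'v set \<Rightarrow> ('v \<Rightarrow> 'v \<Rightarrow> bool) \<Rightarrow> bool" where
  "is_cycle_graph V E \<longleftrightarrow> (\<exists>n v. n \<ge> 3 \<and> bij_betw v {..<n} V \<and>
      (\<forall>i<n. \<forall>j<n. E (v i) (v j) \<longleftrightarrow> (j = Suc i mod n \<or> i = Suc j mod n)))"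

end

theory Submission
  imports Defs
begin

text \<open>Suppose \<open>\<Gamma>\<^sub>E(R)\<close> were an n-cycle whose vertices are represented by r(0), ..., r(n-1).
  Every nonzero zero divisor z has the annihilator of some r(k), so the indices j with
  z r(j) = 0 are those of the neighbours of vertex k, plus possibly k itself; and two
  representatives annihilated by the same r(k) coincide. For n \<ge> 5, the element r(0) r(2)
  is killed by r(1), r(3) and r(n-1), but no vertex is adjacent or equal to all three.
  For n = 4 each diagonal contains a vertex of square zero, and for n = 3 two vertices have
  nonzero square; in both cases the sum of two such representatives is a zero divisor
  whose products with the r(j) fit no vertex.\<close>

definition cycle_adj :: "nat \<Rightarrow> nat \<Rightarrow> nat \<Rightarrow> bool" where
  "cycle_adj n i j \<longleftrightarrow> j = Suc i mod n \<or> i = Suc j mod n"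

lemma cycle_adj_iff:
  assumes "i < n" "j < n"
  shows "cycle_adj n i j \<longleftrightarrow> j = Suc i \<or> i = Suc j \<or> (i = 0 \<and> j = n - 1) \<or> (j = 0 \<and> i = n - 1)"
  using assms unfolding cycle_adj_def
  by (cases "Suc i = n"; cases "Suc j = n") auto

lemma cycle_adj_3: "i < 3 \<Longrightarrow> j < 3 \<Longrightarrow> cycle_adj 3 i j \<longleftrightarrow> i \<noteq> j"
  by (auto simp: cycle_adj_iff)

lemma cycle_adj_4: "i < 4 \<Longrightarrow> j < 4 \<Longrightarrow> cycle_adj 4 i j \<longleftrightarrow> odd (i + j)"
  by (simp add: cycle_adj_iff) presburger

lemma no_vertex_adjacent_or_equal_to_1_3_last:
  assumes "n \<ge> 5" "k < n"
    and "k = 1 \<or> cycle_adj n k 1" "k = 3 \<or> cycle_adj n k 3" "k = n - 1 \<or> cycle_adj n k (n - 1)"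
  shows False
  using assms by (simp add: cycle_adj_iff) linarith

lemma ann_class_eq_iff:
  assumes "x \<in> carrier R" "y \<in> carrier R"
  shows "ann_class R x = ann_class R y \<longleftrightarrow> ann R x = ann R y"
proof
  assume "ann_class R x = ann_class R y"
  moreover have "x \<in> ann_class R x" using assms unfolding ann_class_def by auto
  ultimately show "ann R x = ann R y" unfolding ann_class_def by auto
qed (auto simp: ann_class_def)

lemma ann_eq_imp_mult_zero_iff:
  assumes "ann R x = ann R y" "w \<in> carrier R"
  shows "x \<otimes>\<^bsub>R\<^esub> w = \<zero>\<^bsub>R\<^esub> \<longleftrightarrow> y \<otimes>\<^bsub>R\<^esub> w = \<zero>\<^bsub>R\<^esub>"
  using assms unfolding ann_def by blast

lemma nz_zero_divisors_carrier: "x \<in> nz_zero_divisors R \<Longrightarrow> x \<in> carrier R"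
  unfolding nz_zero_divisors_def by auto

lemma nz_zero_divisors_nonzero: "x \<in> nz_zero_divisors R \<Longrightarrow> x \<noteq> \<zero>\<^bsub>R\<^esub>"
  unfolding nz_zero_divisors_def by auto

context cring
begin

lemma nz_zero_divisorsI:
  assumes "y \<in> carrier R" "y \<noteq> \<zero>" "a \<in> carrier R" "a \<noteq> \<zero>" "a \<otimes> y = \<zero>"
  shows "y \<in> nz_zero_divisors R"
  using assms m_comm[of y a] unfolding nz_zero_divisors_def by auto

lemma GammaE_adj_ann_class_iff:
  assumes x: "x \<in> nz_zero_divisors R" and y: "y \<in> nz_zero_divisors R"
    and ne: "ann_class R x \<noteq> ann_class R y"
  shows "GammaE_adj R (ann_class R x) (ann_class R y) \<longleftrightarrow> x \<otimes> y = \<zero>"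
proof
  assume "GammaE_adj R (ann_class R x) (ann_class R y)"
  then obtain x' y' where x': "x' \<in> nz_zero_divisors R" and y': "y' \<in> nz_zero_divisors R"
    and cx: "ann_class R x = ann_class R x'" and cy: "ann_class R y = ann_class R y'"
    and "x' \<otimes> y' = \<zero>"
    unfolding GammaE_adj_def by auto
  have carrier: "x \<in> carrier R" "y \<in> carrier R" "x' \<in> carrier R" "y' \<in> carrier R"
    using x y x' y' by (simp_all add: nz_zero_divisors_carrier)
  have "ann R x = ann R x'" "ann R y = ann R y'"
    using cx cy carrier by (simp_all add: ann_class_eq_iff)
  have "x \<otimes> y' = \<zero>"
    using ann_eq_imp_mult_zero_iff[OF \<open>ann R x = ann R x'\<close> carrier(4)] \<open>x' \<otimes> y' = \<zero>\<close>
    by simp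
  then have "y \<otimes> x = \<zero>"
    using ann_eq_imp_mult_zero_iff[OF \<open>ann R y = ann R y'\<close> carrier(1)] m_comm carrier
    by simp
  then show "x \<otimes> y = \<zero>"
    using m_comm carrier by simp
next
  assume "x \<otimes> y = \<zero>"
  moreover have "ann_class R x \<in> GammaE_vertices R" "ann_class R y \<in> GammaE_vertices R"
    using x y unfolding GammaE_vertices_def by simp_all
  ultimately show "GammaE_adj R (ann_class R x) (ann_class R y)"
    using x y ne unfolding GammaE_adj_def by blast
qed

end

locale GammaE_cycle = cring +
  fixes n :: nat and r :: "nat \<Rightarrow> 'a"
  assumes length_ge_3: "n \<ge> 3"
    and r_nz_zero_divisor: "i < n \<Longrightarrow> r i \<in> nz_zero_divisors R"
    and ann_r_inj: "\<lbrakk>i < n; j < n; ann R (r i) = ann R (r j)\<rbrakk> \<Longrightarrow> i = j"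
    and ann_r_surj: "z \<in> nz_zero_divisors R \<Longrightarrow> \<exists>k<n. ann R z = ann R (r k)"
    and r_mult_eq_zero_iff: "\<lbrakk>i < n; j < n; i \<noteq> j\<rbrakk> \<Longrightarrow> r i \<otimes> r j = \<zero> \<longleftrightarrow> cycle_adj n i j"

lemma GammaE_vertex_representatives:
  assumes "v ` I \<subseteq> GammaE_vertices R"
  obtains r where "\<And>i. i \<in> I \<Longrightarrow> r i \<in> nz_zero_divisors R \<and> v i = ann_class R (r i)"
proof -
  have "\<forall>i\<in>I. \<exists>z. z \<in> nz_zero_divisors R \<and> v i = ann_class R z"
    using assms unfolding GammaE_vertices_def by blast
  then obtain r where "\<forall>i\<in>I. r i \<in> nz_zero_divisors R \<and> v i = ann_class R (r i)"
    by (rule bchoice[THEN exE])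
  then show thesis using that by blast
qed

lemma (in cring) GammaE_cycle_if_is_cycle_graph:
  assumes "is_cycle_graph (GammaE_vertices R) (GammaE_adj R)"
  obtains n r where "GammaE_cycle R n r"
proof -
  obtain n v where n: "n \<ge> 3" and bij: "bij_betw v {..<n} (GammaE_vertices R)"
    and adj: "\<And>i j. \<lbrakk>i < n; j < n\<rbrakk> \<Longrightarrow> GammaE_adj R (v i) (v j) \<longleftrightarrow> cycle_adj n i j"
    using assms unfolding is_cycle_graph_def cycle_adj_def by auto
  have v_range: "v ` {..<n} = ann_class R ` nz_zero_divisors R"
    using bij unfolding bij_betw_def GammaE_vertices_def by simp
  obtain r where r: "\<And>i. i < n \<Longrightarrow> r i \<in> nz_zero_divisors R \<and> v i = ann_class R (r i)"
    using GammaE_vertex_representatives[of v "{..<n}" R] v_range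
    unfolding GammaE_vertices_def by auto
  have carrier: "r i \<in> carrier R" if "i < n" for i
    using r[OF that] by (simp add: nz_zero_divisors_carrier)
  have v_eq_iff: "v i = v j \<longleftrightarrow> ann R (r i) = ann R (r j)" if "i < n" "j < n" for i j
    using r[OF that(1)] r[OF that(2)] carrier[OF that(1)] carrier[OF that(2)]
    by (simp add: ann_class_eq_iff)
  have inj: "i = j" if "i < n" "j < n" "v i = v j" for i j
    using bij that unfolding bij_betw_def inj_on_def by simp
  have "GammaE_cycle R n r"
  proof (intro GammaE_cycle.intro GammaE_cycle_axioms.intro)
    show "cring R" by (rule is_cring)
    show "n \<ge> 3" by (rule n)
    show "r i \<in> nz_zero_divisors R" if "i < n" for i
      using r[OF that] by blast
    show "i = j" if "i < n" "j < n" "ann R (r i) = ann R (r j)" for i j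
      using that v_eq_iff inj by blast
    show "\<exists>k<n. ann R z = ann R (r k)" if z: "z \<in> nz_zero_divisors R" for z
    proof -
      have "ann_class R z \<in> v ` {..<n}"
        using z by (simp add: v_range)
      then obtain k where k: "k < n" "ann_class R z = v k"
        by auto
      then have "ann_class R z = ann_class R (r k)" using r by simp
      then have "ann R z = ann R (r k)"
        using k z carrier by (simp add: nz_zero_divisors_carrier ann_class_eq_iff)
      with k show ?thesis by blast
    qed
    show "r i \<otimes> r j = \<zero> \<longleftrightarrow> cycle_adj n i j" if ij: "i < n" "j < n" "i \<noteq> j" for i j
    proof -
      have "ann_class R (r i) \<noteq> ann_class R (r j)" using r ij inj by metis
      then show ?thesis
        using adj[OF ij(1,2)] r[OF ij(1)] r[OF ij(2)] GammaE_adj_ann_class_iff by simp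
    qed
  qed
  then show thesis by (rule that)
qed

context GammaE_cycle
begin

lemma r_carrier [simp]: "i < n \<Longrightarrow> r i \<in> carrier R"
  by (simp add: r_nz_zero_divisor nz_zero_divisors_carrier)

lemma r_nonzero [simp]: "i < n \<Longrightarrow> r i \<noteq> \<zero>"
  by (simp add: r_nz_zero_divisor nz_zero_divisors_nonzero)

lemma r_mult_eq_zero_imp: "\<lbrakk>i < n; j < n; r i \<otimes> r j = \<zero>\<rbrakk> \<Longrightarrow> i = j \<or> cycle_adj n i j"
  using r_mult_eq_zero_iff by blast

lemma nz_zero_divisor_annihilates_like_r:
  assumes "z \<in> nz_zero_divisors R"
  shows "\<exists>k<n. \<forall>w\<in>carrier R. z \<otimes> w = \<zero> \<longleftrightarrow> r k \<otimes> w = \<zero>"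
proof -
  obtain k where "k < n" "ann R z = ann R (r k)"
    using ann_r_surj[OF assms] by blast
  then show ?thesis
    using ann_eq_imp_mult_zero_iff[of R z "r k"] by blast
qed

lemma annihilated_annihilates_like_r:
  assumes "z \<in> carrier R" "z \<noteq> \<zero>" "i < n" "r i \<otimes> z = \<zero>"
  shows "\<exists>k<n. \<forall>w\<in>carrier R. z \<otimes> w = \<zero> \<longleftrightarrow> r k \<otimes> w = \<zero>"
  using assms nz_zero_divisorsI[of z "r i"] nz_zero_divisor_annihilates_like_r by simp

lemma ann_r_subset:
  assumes p: "p < n" and q: "q < n"
    and killers: "\<And>k. \<lbrakk>k < n; r k \<otimes> r p = \<zero>\<rbrakk> \<Longrightarrow> r k \<otimes> r q = \<zero>"
  shows "ann R (r p) \<subseteq> ann R (r q)"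
proof
  fix y assume "y \<in> ann R (r p)"
  then have y: "y \<in> carrier R" "r p \<otimes> y = \<zero>" unfolding ann_def by auto
  show "y \<in> ann R (r q)"
  proof (cases "y = \<zero>")
    case True
    with q show ?thesis unfolding ann_def by simp
  next
    case False
    then obtain k where k: "k < n" "\<And>w. w \<in> carrier R \<Longrightarrow> y \<otimes> w = \<zero> \<longleftrightarrow> r k \<otimes> w = \<zero>"
      using annihilated_annihilates_like_r[of y p] y p by blast
    have "y \<otimes> r p = \<zero>" using y p m_comm[of y "r p"] by simp
    then have "r k \<otimes> r q = \<zero>" using k(1) k(2)[OF r_carrier[OF p]] killers by blast
    then have "y \<otimes> r q = \<zero>" using k(2)[OF r_carrier[OF q]] by blast
    then show ?thesis using y q m_comm[of y "r q"] unfolding ann_def by simp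
  qed
qed

lemma eq_if_annihilated_by_same_r:
  assumes "p < n" "q < n" "\<And>k. k < n \<Longrightarrow> r k \<otimes> r p = \<zero> \<longleftrightarrow> r k \<otimes> r q = \<zero>"
  shows "p = q"
  using assms by (intro ann_r_inj equalityI ann_r_subset) auto

lemma length_not_ge_5:
  assumes "n \<ge> 5"
  shows False
proof -
  have edges: "r 1 \<otimes> r 2 = \<zero>" "r 2 \<otimes> r 3 = \<zero>" "r (n - 1) \<otimes> r 0 = \<zero>"
    and non_edge: "r 0 \<otimes> r 2 \<noteq> \<zero>"
    using assms by (simp_all add: r_mult_eq_zero_iff cycle_adj_iff)
  define z where "z = r 0 \<otimes> r 2"
  have z: "z \<in> carrier R" "z \<noteq> \<zero>" using assms non_edge by (simp_all add: z_def)
  have "z \<otimes> r 1 = r 0 \<otimes> (r 1 \<otimes> r 2)" "z \<otimes> r 3 = r 0 \<otimes> (r 2 \<otimes> r 3)"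
    "z \<otimes> r (n - 1) = (r (n - 1) \<otimes> r 0) \<otimes> r 2"
    using assms by (simp_all add: z_def m_ac)
  then have kills: "z \<otimes> r 1 = \<zero>" "z \<otimes> r 3 = \<zero>" "z \<otimes> r (n - 1) = \<zero>"
    using assms edges by simp_all
  have "r 1 \<otimes> z = \<zero>"
    using kills(1) z assms m_comm[of z "r 1"] by simp
  then obtain k where k: "k < n" "\<And>w. w \<in> carrier R \<Longrightarrow> z \<otimes> w = \<zero> \<longleftrightarrow> r k \<otimes> w = \<zero>"
    using annihilated_annihilates_like_r[of z 1] z assms by auto
  have "k = j \<or> cycle_adj n k j" if "j \<in> {1, 3, n - 1}" for j
    using that assms kills k r_mult_eq_zero_imp[of k j] by auto
  then show False
    using no_vertex_adjacent_or_equal_to_1_3_last[OF assms k(1)] by blast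
qed

lemma mult_eq_zero_iff_odd_if_length_4:
  assumes "n = 4" "i < 4" "j < 4" "i \<noteq> j"
  shows "r i \<otimes> r j = \<zero> \<longleftrightarrow> odd (i + j)"
  using assms r_mult_eq_zero_iff cycle_adj_4 by simp

lemma diagonal_square_zero_if_length_4:
  assumes n: "n = 4" and ij: "i < 4" "j < 4" "i \<noteq> j" "even (i + j)"
  shows "r i \<otimes> r i = \<zero> \<or> r j \<otimes> r j = \<zero>"
proof (rule ccontr)
  assume squares: "\<not> ?thesis"
  have "r k \<otimes> r i = \<zero> \<longleftrightarrow> r k \<otimes> r j = \<zero>" if "k < n" for k
    using that n ij squares mult_eq_zero_iff_odd_if_length_4[OF n, of k i]
      mult_eq_zero_iff_odd_if_length_4[OF n, of k j] mult_eq_zero_iff_odd_if_length_4[OF n, of i j]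
    by (cases "k = i"; cases "k = j") auto
  then show False
    using eq_if_annihilated_by_same_r[of i j] ij n by simp
qed

lemma length_not_4:
  assumes n: "n = 4"
  shows False
proof -
  note adj = mult_eq_zero_iff_odd_if_length_4[OF n]
  obtain a where a: "a \<in> {0, 2}" "r a \<otimes> r a = \<zero>"
    using diagonal_square_zero_if_length_4[OF n, of 0 2] by auto
  obtain b where b: "b \<in> {1, 3}" "r b \<otimes> r b = \<zero>"
    using diagonal_square_zero_if_length_4[OF n, of 1 3] by auto
  define c d where "c = 2 - a" and "d = 4 - b"
  have idx: "a < 4" "b < 4" "c < 4" "d < 4" "even a" "even c" "odd b" "odd d"
    "a \<noteq> c" "b \<noteq> d" "a \<noteq> b" "b \<noteq> c" "a \<noteq> d"
    using a(1) b(1) by (auto simp: c_def d_def)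
  have products: "r a \<otimes> r b = \<zero>" "r b \<otimes> r c = \<zero>" "r a \<otimes> r d = \<zero>"
    "r a \<otimes> r c \<noteq> \<zero>" "r b \<otimes> r d \<noteq> \<zero>"
    using idx adj[of a b] adj[of b c] adj[of a d] adj[of a c] adj[of b d] by simp_all
  define s where "s = r a \<oplus> r b"
  have s: "s \<in> carrier R" "s \<otimes> r c = r a \<otimes> r c" "s \<otimes> r d = r b \<otimes> r d" "r a \<otimes> s = \<zero>"
    using idx products a(2) n by (simp_all add: s_def l_distr r_distr)
  moreover have "s \<noteq> \<zero>"
  proof
    assume "s = \<zero>"
    then have "s \<otimes> r c = \<zero>" using idx n by simp
    with s(2) products(4) show False by simp
  qed
  ultimately obtain k where k: "k < n" "\<And>w. w \<in> carrier R \<Longrightarrow> s \<otimes> w = \<zero> \<longleftrightarrow> r k \<otimes> w = \<zero>"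
    using annihilated_annihilates_like_r[of s a] idx n by auto
  have "r k \<otimes> r c \<noteq> \<zero>" "r k \<otimes> r d \<noteq> \<zero>"
    using k(2)[of "r c"] k(2)[of "r d"] s products idx n by simp_all
  moreover have "r k \<otimes> r c = \<zero> \<or> r k \<otimes> r d = \<zero>"
  proof (cases "even k")
    case True
    then have "k \<noteq> d" "odd (k + d)" using idx by auto
    then show ?thesis using adj[of k d] k(1) idx n by simp
  next
    case False
    then have "k \<noteq> c" "odd (k + c)" using idx by auto
    then show ?thesis using adj[of k c] k(1) idx n by simp
  qed
  ultimately show False by blast
qed

lemma mult_eq_zero_if_length_3:
  assumes "n = 3" "i < 3" "j < 3" "i \<noteq> j"
  shows "r i \<otimes> r j = \<zero>"
  using assms r_mult_eq_zero_iff cycle_adj_3 by simp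

lemma square_zero_unique_if_length_3:
  assumes n: "n = 3" and ij: "i < 3" "j < 3"
    and squares: "r i \<otimes> r i = \<zero>" "r j \<otimes> r j = \<zero>"
  shows "i = j"
proof (rule eq_if_annihilated_by_same_r)
  show "r k \<otimes> r i = \<zero> \<longleftrightarrow> r k \<otimes> r j = \<zero>" if "k < n" for k
    using that ij squares n mult_eq_zero_if_length_3[OF n, of k i] mult_eq_zero_if_length_3[OF n, of k j]
    by (cases "k = i"; cases "k = j") auto
qed (use ij n in auto)

lemma length_not_3:
  assumes n: "n = 3"
  shows False
proof -
  note adj = mult_eq_zero_if_length_3[OF n]
  obtain a b where ab: "a < 3" "b < 3" "a \<noteq> b" "r a \<otimes> r a \<noteq> \<zero>" "r b \<otimes> r b \<noteq> \<zero>"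
  proof -
    consider "r 0 \<otimes> r 0 \<noteq> \<zero>" "r 1 \<otimes> r 1 \<noteq> \<zero>" | "r 0 \<otimes> r 0 \<noteq> \<zero>" "r 2 \<otimes> r 2 \<noteq> \<zero>"
      | "r 1 \<otimes> r 1 \<noteq> \<zero>" "r 2 \<otimes> r 2 \<noteq> \<zero>"
      using square_zero_unique_if_length_3[OF n, of 0 1] square_zero_unique_if_length_3[OF n, of 0 2]
        square_zero_unique_if_length_3[OF n, of 1 2]
      by force
    then show thesis
      using that[of 0 1] that[of 0 2] that[of 1 2] by cases auto
  qed
  define c where "c = 3 - a - b"
  have c: "c < 3" "c \<noteq> a" "c \<noteq> b"
    using ab(1-3) unfolding c_def by presburger+
  define s where "s = r a \<oplus> r b"
  have s: "s \<in> carrier R" "s \<otimes> r a = r a \<otimes> r a" "s \<otimes> r b = r b \<otimes> r b" "r c \<otimes> s = \<zero>"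
    using ab c adj n by (simp_all add: s_def l_distr r_distr)
  moreover have "s \<noteq> \<zero>"
  proof
    assume "s = \<zero>"
    then have "s \<otimes> r a = \<zero>" using ab n by simp
    with s(2) ab(4) show False by simp
  qed
  ultimately obtain k where k: "k < n" "\<And>w. w \<in> carrier R \<Longrightarrow> s \<otimes> w = \<zero> \<longleftrightarrow> r k \<otimes> w = \<zero>"
    using annihilated_annihilates_like_r[of s c] c n by auto
  have "r k \<otimes> r a \<noteq> \<zero>" "r k \<otimes> r b \<noteq> \<zero>"
    using k(2)[of "r a"] k(2)[of "r b"] s ab n by simp_all
  then have "k = a" "k = b"
    using adj[of k a] adj[of k b] k(1) ab(1,2) n by auto
  with ab(3) show False by simp
qed

theorem contradiction: False
proof -
  have "n = 3 \<or> n = 4 \<or> n \<ge> 5"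
    using length_ge_3 by linarith
  then show False
    using length_not_3 length_not_4 length_not_ge_5 by blast
qed

end

theorem proposition1p8:
  fixes R :: "('a, 'b) ring_scheme" (structure)
  assumes "cring R" and "noetherian_ring R"
  shows "\<not> is_cycle_graph (GammaE_vertices R) (GammaE_adj R)"
proof
  assume "is_cycle_graph (GammaE_vertices R) (GammaE_adj R)"
  then obtain n r where "GammaE_cycle R n r"
    using cring.GammaE_cycle_if_is_cycle_graph[OF assms(1)] by blast
  then show False
    by (rule GammaE_cycle.contradiction)
qed

end
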